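(* Let $K\ge1$ be fixed, $\boldsymbol{\beta}_0\in\mathbb{R}^K$, and for each $n>K$ let the $n\times K$ design matrix $\mathbf{X}$ with rows $\mathbf{x}_i$ satisfy $\mathbf{X}^t\mathbf{X}=n\mathbf{I}$, $\sum_{i=1}^n x_{i,k}=0$ for each $k$, and $\max_{1\le i\le n}\|\mathbf{x}_i\|/\sqrt n\to0$. Suppose $Y_i=\mathbf{x}_i^t\boldsymbol{\beta}_0+\varepsilon_i$ with $\varepsilon_i$ independent, $\mathbb{E}(\varepsilon_i)=0$, $\mathbb{E}(\varepsilon_i^2)=\sigma_0^2>0$, $\mathbb{E}(\varepsilon_i^4)\le M<\infty$. Consider the rescaled spike and slab model with $\lambda_n=n$, and priors $\pi,\mu$ such that $\pi\{\gamma_k\ge\eta_0\}=1$ for some $\eta_0>0$ and every $k$, and $\mu\{\sigma^2\le s_0^2\}=1$ for some $0<s_0^2<\infty$. Let $C_n\to\infty$ be any positive increasing sequence with $C_n/\sqrt n\to0$ and let $\widehat{\mathcal{M}}_n=\mathcal{M}_n(C_n)$. Then $\widehat{\mathcal{M}}_n\to\mathcal{M}_0$ in probability.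
   Context: $\mathbf{Y}=(Y_1,\dots,Y_n)^t$, OLS $\widehat{\boldsymbol{\beta}}_n^\circ=(\mathbf{X}^t\mathbf{X})^{-1}\mathbf{X}^t\mathbf{Y}$, $\widehat\sigma_n^2=\|\mathbf{Y}-\mathbf{X}\widehat{\boldsymbol{\beta}}_n^\circ\|^2/(n-K)$. Rescaled spike and slab model: $Y_i^*=\widehat\sigma_n^{-1}n^{1/2}Y_i$, and as data $\mathbf{Y}^*$ is modeled by $(Y_i^*\mid\boldsymbol{\beta},\sigma^2)$ independent $N(\mathbf{x}_i^t\boldsymbol{\beta},\sigma^2\lambda_n)$, $(\boldsymbol{\beta}\mid\boldsymbol{\gamma})\sim N(\mathbf{0},\mathrm{diag}(\gamma_1,\dots,\gamma_K))$, $\boldsymbol{\gamma}\sim\pi$, $\sigma^2\sim\mu$, with $\pi\{\gamma_k>0\}=1$, $\mu\{\sigma^2>0\}=1$. $\widehat{\boldsymbol{\beta}}_n^*=(\widehat\beta_{1,n}^*,\dots,\widehat\beta_{K,n}^* )^t$ is the posterior mean of $\boldsymbol{\beta}$ given $\mathbf{Y}^*$. $\mathcal{M}_0=(\mathbb{I}\{\beta_{1,0}\ne0\},\dots,\mathbb{I}\{\beta_{K,0}\ne0\})^t$ and, for $C>0$, $\mathcal{M}_n(C)=(\mathbb{I}\{|\widehat\beta_{1,n}^*|\ge C\},\dots,\mathbb{I}\{|\widehat\beta_{K,n}^*|\ge C\})^t$. *)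

theory Defs
  imports "HOL-Probability.Probability"
begin

text \<open>Design: for sample size n, the rows are x n 0, ..., x n (n-1), each in real^'k
  (K = CARD('k)). Data vectors y are functions nat => real, used on indices below n.\<close>

definition gram :: "(nat \<Rightarrow> real^'k) \<Rightarrow> nat \<Rightarrow> real^'k^'k" where
  "gram x n = (\<chi> j l. \<Sum>i<n. x i $ j * x i $ l)"

definition ols :: "(nat \<Rightarrow> real^'k) \<Rightarrow> nat \<Rightarrow> (nat \<Rightarrow> real) \<Rightarrow> real^'k" where
  "ols x n y = matrix_inv (gram x n) *v (\<chi> j. \<Sum>i<n. x i $ j * y i)"

definition sigma_hat_sq :: "(nat \<Rightarrow> real^'k) \<Rightarrow> nat \<Rightarrow> (nat \<Rightarrow> real) \<Rightarrow> real" where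
  "sigma_hat_sq x n y = (\<Sum>i<n. (y i - x i \<bullet> ols x n y)\<^sup>2) / (real n - real CARD('k))"

definition rescaled :: "(nat \<Rightarrow> real^'k) \<Rightarrow> nat \<Rightarrow> (nat \<Rightarrow> real) \<Rightarrow> nat \<Rightarrow> real" where
  "rescaled x n y i = sqrt (real n) / sqrt (sigma_hat_sq x n y) * y i"

definition ss_lik :: "(nat \<Rightarrow> real^'k) \<Rightarrow> nat \<Rightarrow> real \<Rightarrow> (nat \<Rightarrow> real) \<Rightarrow> real^'k \<Rightarrow> real \<Rightarrow> real" where
  "ss_lik x n lam y b s = (\<Prod>i<n. normal_density (x i \<bullet> b) (sqrt (s * lam)) (y i))"

definition slab_dens :: "real^'k \<Rightarrow> real^'k \<Rightarrow> real" where
  "slab_dens g b = (\<Prod>k\<in>UNIV. normal_density 0 (sqrt (g $ k)) (b $ k))"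

text \<open>Posterior mean of beta given data y, in the model
  (y_i | beta, sigma^2) ~ N(x_i^t beta, sigma^2 lam) independent,
  (beta | gamma) ~ N(0, diag gamma), gamma ~ pi, sigma^2 ~ mu (independent priors),
  computed by Bayes' formula.\<close>
definition post_mean ::
  "(real^'k) measure \<Rightarrow> real measure \<Rightarrow> real \<Rightarrow> (nat \<Rightarrow> real^'k) \<Rightarrow> nat \<Rightarrow> (nat \<Rightarrow> real) \<Rightarrow> real^'k"
  where
  "post_mean pr mu lam x n y =
     (\<chi> k. (\<integral>gs. (\<integral>b. b $ k * ss_lik x n lam y b (snd gs) * slab_dens (fst gs) b \<partial>lborel) \<partial>(pr \<Otimes>\<^sub>M mu))
          / (\<integral>gs. (\<integral>b. ss_lik x n lam y b (snd gs) * slab_dens (fst gs) b \<partial>lborel) \<partial>(pr \<Otimes>\<^sub>M mu)))"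

definition model_hat :: "real^'k \<Rightarrow> real \<Rightarrow> 'k \<Rightarrow> bool" where
  "model_hat bhat C = (\<lambda>k. \<bar>bhat $ k\<bar> \<ge> C)"

definition model_true :: "real^'k \<Rightarrow> 'k \<Rightarrow> bool" where
  "model_true b0 = (\<lambda>k. b0 $ k \<noteq> 0)"

end

theory Submission
  imports Defs
begin

(* For an orthogonal design (X^t X = n I) and lambda_n = n the likelihood of the rescaled data
   factorises over the coordinates of beta around the OLS estimate m* = X^t Y* / n, and each
   N(0, gamma_k) slab is conjugate to its factor.  Hence the posterior mean is m*_k times the
   posterior average of the shrinkage factor gamma_k / (gamma_k + sigma^2), which the prior support
   confines to [eta0 / (eta0 + s0^2), 1].  Here m*_k = sqrt n (beta_{0,k} + u_k) / sigma-hat_n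
   with u = X^t eps / n.  On the event that sum eps_i^2 is within n sigma0^2 / 2 of its mean and
   every n u_k^2 is small compared with sigma0^2 C_n^2 and with n beta_{0,k}^2, the estimate
   sigma-hat_n^2 lies in (sigma0^2 / 4, 3 sigma0^2); then |m*_k| stays below C_n when
   beta_{0,k} = 0 and is of order sqrt n >> C_n otherwise.  Chebyshev's inequality (with fourth
   moments for sum eps_i^2) bounds the probability of the complementary event by
   O(1 / n + 1 / C_n^2). *)

section \<open>Orthogonal designs\<close>

definition ols_orth :: "(nat \<Rightarrow> real^'k) \<Rightarrow> nat \<Rightarrow> (nat \<Rightarrow> real) \<Rightarrow> real^'k" where
  "ols_orth X n y = (\<chi> j. (\<Sum>i<n. X i $ j * y i) / real n)"

definition rss :: "(nat \<Rightarrow> real^'k) \<Rightarrow> nat \<Rightarrow> (nat \<Rightarrow> real) \<Rightarrow> real" where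
  "rss X n y = (\<Sum>i<n. (y i - X i \<bullet> ols_orth X n y)\<^sup>2)"

lemma gram_eq_scaled_id_entry:
  assumes "gram X n = real n *\<^sub>R mat 1"
  shows "(\<Sum>i<n. X i $ j * X i $ l) = (if j = l then real n else 0)"
  using arg_cong[OF assms, of "\<lambda>A. A $ j $ l"] by (simp add: gram_def mat_def)

lemma sum_mult_inner_eq_ols_orth:
  assumes "n > 0"
  shows "(\<Sum>i<n. y i * (X i \<bullet> v)) = real n * (ols_orth X n y \<bullet> v)"
proof -
  have "(\<Sum>i<n. y i * (X i \<bullet> v)) = (\<Sum>j\<in>UNIV. (\<Sum>i<n. X i $ j * y i) * v $ j)"
    unfolding inner_vec_def sum_distrib_left sum_distrib_right by (subst sum.swap) (simp add: mult_ac)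
  also have "\<dots> = real n * (ols_orth X n y \<bullet> v)"
    using assms by (simp add: ols_orth_def inner_vec_def sum_distrib_left)
  finally show ?thesis .
qed

lemma ols_orth_design:
  assumes "gram X n = real n *\<^sub>R mat 1" "n > 0"
  shows "ols_orth X n (\<lambda>i. X i \<bullet> b) = b"
proof -
  have "(\<Sum>i<n. X i $ j * (X i \<bullet> b)) = (\<Sum>l\<in>UNIV. b $ l * (\<Sum>i<n. X i $ j * X i $ l))" for j
    unfolding inner_vec_def sum_distrib_left by (subst sum.swap) (simp add: mult_ac)
  then show ?thesis
    using assms by (simp add: ols_orth_def vec_eq_iff gram_eq_scaled_id_entry if_distrib cong: if_cong)
qed

lemma ols_orth_add: "ols_orth X n (\<lambda>i. f i + g i) = ols_orth X n f + ols_orth X n g"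
  by (simp add: ols_orth_def vec_eq_iff sum.distrib algebra_simps add_divide_distrib)

lemma ols_orth_scale: "ols_orth X n (\<lambda>i. c * f i) = c *\<^sub>R ols_orth X n f"
  by (simp add: ols_orth_def vec_eq_iff sum_distrib_left mult_ac)

lemma ols_eq_ols_orth:
  assumes "gram X n = real n *\<^sub>R mat 1" "n > 0"
  shows "ols X n y = ols_orth X n y"
proof -
  let ?A = "real n *\<^sub>R (mat 1 :: real^'k^'k)" and ?B = "(1 / real n) *\<^sub>R (mat 1 :: real^'k^'k)"
  have inv: "?A ** ?B = mat 1" "?B ** ?A = mat 1"
    using assms(2) by (simp_all add: matrix_scalar_ac)
  have "?A ** matrix_inv ?A = mat 1"
    unfolding matrix_inv_def by (rule someI2[of _ ?B]) (use inv in auto)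
  then have "matrix_inv ?A = (?B ** ?A) ** matrix_inv ?A"
    by (simp add: inv(2))
  also have "\<dots> = ?B"
    by (simp only: matrix_mul_assoc[symmetric] \<open>?A ** matrix_inv ?A = mat 1\<close> matrix_mul_rid)
  finally have inv_A: "matrix_inv ?A = ?B" .
  have "ols X n y = (1 / real n) *\<^sub>R (\<chi> j. \<Sum>i<n. X i $ j * y i)"
    unfolding ols_def assms(1) inv_A
    by (simp only: scaleR_matrix_vector_assoc[symmetric] matrix_vector_mul_lid)
  then show ?thesis
    by (simp add: ols_orth_def vec_eq_iff)
qed

lemma sum_sq_resid_expand:
  assumes "gram X n = real n *\<^sub>R mat 1" "n > 0"
  shows "(\<Sum>i<n. (y i - X i \<bullet> b)\<^sup>2)
       = (\<Sum>i<n. (y i)\<^sup>2) - 2 * real n * (ols_orth X n y \<bullet> b) + real n * (b \<bullet> b)"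
proof -
  have "(\<Sum>i<n. (X i \<bullet> b)\<^sup>2) = real n * (ols_orth X n (\<lambda>i. X i \<bullet> b) \<bullet> b)"
    using sum_mult_inner_eq_ols_orth[OF assms(2)] by (simp add: power2_eq_square)
  then have "(\<Sum>i<n. (X i \<bullet> b)\<^sup>2) = real n * (b \<bullet> b)"
    by (simp add: ols_orth_design[OF assms])
  moreover have "(\<Sum>i<n. (y i - X i \<bullet> b)\<^sup>2)
      = (\<Sum>i<n. (y i)\<^sup>2) - 2 * (\<Sum>i<n. y i * (X i \<bullet> b)) + (\<Sum>i<n. (X i \<bullet> b)\<^sup>2)"
    by (simp add: power2_diff sum.distrib sum_subtractf sum_distrib_left algebra_simps)
  ultimately show ?thesis
    by (simp add: sum_mult_inner_eq_ols_orth[OF assms(2)])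
qed

lemma rss_eq:
  assumes "gram X n = real n *\<^sub>R mat 1" "n > 0"
  shows "rss X n y = (\<Sum>i<n. (y i)\<^sup>2) - real n * (ols_orth X n y \<bullet> ols_orth X n y)"
  unfolding rss_def sum_sq_resid_expand[OF assms] by simp

lemma sum_sq_resid_decomp:
  assumes "gram X n = real n *\<^sub>R mat 1" "n > 0"
  shows "(\<Sum>i<n. (y i - X i \<bullet> b)\<^sup>2) = rss X n y + real n * (\<Sum>j\<in>UNIV. (b $ j - ols_orth X n y $ j)\<^sup>2)"
  unfolding sum_sq_resid_expand[OF assms] rss_eq[OF assms]
  by (simp add: inner_vec_def power2_diff sum.distrib sum_subtractf sum_distrib_left algebra_simps
      power2_eq_square)

lemma rss_add_design:
  assumes "gram X n = real n *\<^sub>R mat 1" "n > 0"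
  shows "rss X n (\<lambda>i. X i \<bullet> b + e i) = rss X n e"
  by (simp add: rss_def ols_orth_add ols_orth_design[OF assms] inner_add_right)

lemma rss_scale: "rss X n (\<lambda>i. c * y i) = c\<^sup>2 * rss X n y"
  by (simp add: rss_def ols_orth_scale sum_distrib_left power_mult_distrib[symmetric] right_diff_distrib)

lemma sigma_hat_sq_eq_rss:
  fixes X :: "nat \<Rightarrow> real^'k"
  assumes "gram X n = real n *\<^sub>R mat 1" "n > 0"
  shows "sigma_hat_sq X n y = rss X n y / (real n - real CARD('k))"
  by (simp add: sigma_hat_sq_def rss_def ols_eq_ols_orth[OF assms])

lemma inner_self_less_of_components:
  fixes w :: "real^'k"
  assumes "\<And>j. (w $ j)\<^sup>2 < \<delta> j" "\<And>j. \<delta> j \<le> c / real CARD('k)"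
  shows "w \<bullet> w < c"
proof -
  have "w \<bullet> w < (\<Sum>j\<in>(UNIV :: 'k set). c / real CARD('k))"
    unfolding inner_vec_def inner_real_def
    by (rule sum_strict_mono) (use assms in \<open>auto simp: power2_eq_square intro: less_le_trans\<close>)
  then show ?thesis
    by simp
qed

section \<open>Gaussian integrals\<close>

lemma integral_lborel_prod_Basis:
  fixes f :: "'a::euclidean_space \<Rightarrow> real \<Rightarrow> real"
  assumes int: "\<And>b. b \<in> Basis \<Longrightarrow> integrable lborel (f b)"
  shows "(\<integral>x. (\<Prod>b\<in>Basis. f b (x \<bullet> b)) \<partial>lborel) = (\<Prod>b\<in>Basis. \<integral>t. f b t \<partial>lborel)"
proof -
  interpret product_sigma_finite "\<lambda>_. lborel :: real measure" by standard
  let ?T = "\<lambda>F. \<Sum>b\<in>(Basis::'a set). F b *\<^sub>R b"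
  have [measurable]: "b \<in> Basis \<Longrightarrow> f b \<in> borel_measurable borel" for b
    using int by (simp add: borel_measurable_integrable)
  have T: "?T \<in> measurable (\<Pi>\<^sub>M b\<in>Basis. lborel) borel"
    by measurable
  have meas: "(\<lambda>x::'a. \<Prod>b\<in>Basis. f b (x \<bullet> b)) \<in> borel_measurable borel"
    by measurable
  have "(\<Prod>b\<in>Basis. f b (?T F \<bullet> b)) = (\<Prod>b\<in>Basis. f b (F b))" for F
    by (intro prod.cong refl) (simp add: inner_sum_left inner_Basis if_distrib cong: if_cong)
  then have "(\<integral>x. (\<Prod>b\<in>Basis. f b (x \<bullet> b)) \<partial>lborel) = (\<integral>F. (\<Prod>b\<in>Basis. f b (F b)) \<partial>(\<Pi>\<^sub>M b\<in>Basis. lborel))"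
    by (subst lborel_eq) (simp add: integral_distr[OF T meas])
  also have "\<dots> = (\<Prod>b\<in>Basis. \<integral>t. f b t \<partial>lborel)"
    by (rule product_integral_prod) (auto intro: int)
  finally show ?thesis .
qed

lemma prod_Basis_vec: "(\<Prod>b\<in>(Basis :: (real^'k) set). h b) = (\<Prod>j\<in>UNIV. h (axis j 1))"
proof -
  have Basis: "(Basis :: (real^'k) set) = range (\<lambda>j. axis j 1)"
    by (auto simp: Basis_vec_def)
  have "inj (\<lambda>j::'k. axis j (1::real))"
    by (auto simp: inj_def axis_eq_axis)
  then show ?thesis
    unfolding Basis by (simp add: prod.reindex)
qed

lemma integral_lborel_prod_vec:
  fixes f :: "'k::finite \<Rightarrow> real \<Rightarrow> real"
  assumes int: "\<And>j. integrable lborel (f j)"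
  shows "(\<integral>x. (\<Prod>j\<in>UNIV. f j ((x::real^'k) $ j)) \<partial>lborel) = (\<Prod>j\<in>UNIV. \<integral>t. f j t \<partial>lborel)"
proof -
  let ?ax = "\<lambda>j::'k. axis j (1::real)"
  define F where "F b = f (inv ?ax b)" for b
  have "inj ?ax"
    by (auto simp: inj_def axis_eq_axis)
  then have F_axis: "F (axis j 1) = f j" for j
    unfolding F_def using inv_f_f[of ?ax j] by simp
  have "(\<Prod>j\<in>UNIV. f j (x $ j)) = (\<Prod>b\<in>Basis. F b (x \<bullet> b))" for x :: "real^'k"
    by (simp add: prod_Basis_vec F_axis inner_axis)
  then have "(\<integral>x. (\<Prod>j\<in>UNIV. f j ((x::real^'k) $ j)) \<partial>lborel) = (\<integral>x. (\<Prod>b\<in>Basis. F b (x \<bullet> b)) \<partial>lborel)"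
    by simp
  also have "\<dots> = (\<Prod>b\<in>Basis. \<integral>t. F b t \<partial>lborel)"
    by (rule integral_lborel_prod_Basis) (auto simp: Basis_vec_def F_axis int)
  finally show ?thesis
    by (simp add: prod_Basis_vec F_axis)
qed

lemma integral_lborel_component_prod_vec:
  fixes f :: "'k::finite \<Rightarrow> real \<Rightarrow> real"
  assumes int: "\<And>j. integrable lborel (f j)" and int_k: "integrable lborel (\<lambda>t. t * f k t)"
  shows "(\<integral>x. (x::real^'k) $ k * (\<Prod>j\<in>UNIV. f j (x $ j)) \<partial>lborel)
    = (\<integral>t. t * f k t \<partial>lborel) * (\<Prod>j\<in>UNIV - {k}. \<integral>t. f j t \<partial>lborel)"
proof -
  define h where "h j t = (if j = k then t * f j t else f j t)" for j t
  have "integrable lborel (h j)" for j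
    using int int_k by (cases "j = k") (simp_all add: h_def[abs_def])
  moreover have "(\<Prod>j\<in>UNIV - {k}. h j (x $ j)) = (\<Prod>j\<in>UNIV - {k}. f j (x $ j))"
    "(\<Prod>j\<in>UNIV - {k}. \<integral>t. h j t \<partial>lborel) = (\<Prod>j\<in>UNIV - {k}. \<integral>t. f j t \<partial>lborel)" for x :: "real^'k"
    by (auto intro!: prod.cong simp: h_def)
  ultimately show ?thesis
    using integral_lborel_prod_vec[of h] by (simp add: prod.remove[of UNIV k] h_def mult.assoc)
qed

lemma normal_density_conjugate:
  assumes s: "s > 0" and g: "g > 0"
  shows "exp (- (t - m)\<^sup>2 / (2 * s)) * normal_density 0 (sqrt g) t
       = sqrt (s / (s + g)) * exp (- m\<^sup>2 / (2 * (s + g)))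
           * normal_density (g / (g + s) * m) (sqrt (s * g / (s + g))) t"
proof -
  define d where "d = s + g"
  have "g + s = d"
    by (simp add: d_def)
  then have "- (t - m)\<^sup>2 / (2 * s) + - t\<^sup>2 / (2 * g)
        - (- m\<^sup>2 / (2 * (s + g)) + - (t - g / (g + s) * m)\<^sup>2 / (2 * (s * g / (s + g))))
      = ((t - m)\<^sup>2 * g * d + t\<^sup>2 * s * d - m\<^sup>2 * s * g - (d * t - g * m)\<^sup>2) / (- 2 * s * g * d)"
    using s g unfolding d_def[symmetric] by (simp add: field_simps power2_eq_square)
  also have "\<dots> = 0"
    by (simp add: d_def power2_eq_square algebra_simps)
  finally have exponent: "- (t - m)\<^sup>2 / (2 * s) + - t\<^sup>2 / (2 * g)
      = - m\<^sup>2 / (2 * (s + g)) + - (t - g / (g + s) * m)\<^sup>2 / (2 * (s * g / (s + g)))"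
    by simp
  have "d > 0"
    using s g by (simp add: d_def)
  then have "(s / d) / (2 * pi * (s * g / d)) = 1 / (2 * pi * g)"
    using s g by (simp add: field_simps)
  then have const: "sqrt (s / (s + g)) / sqrt (2 * pi * (s * g / (s + g))) = 1 / sqrt (2 * pi * g)"
    unfolding d_def by (metis real_sqrt_divide real_sqrt_one)
  have "normal_density 0 (sqrt g) t = 1 / sqrt (2 * pi * g) * exp (- t\<^sup>2 / (2 * g))"
    using g by (simp add: normal_density_def)
  then have "exp (- (t - m)\<^sup>2 / (2 * s)) * normal_density 0 (sqrt g) t
      = 1 / sqrt (2 * pi * g) * exp (- (t - m)\<^sup>2 / (2 * s) + - t\<^sup>2 / (2 * g))"
    unfolding exp_add by (simp add: mult_ac)
  also have "\<dots> = sqrt (s / (s + g)) / sqrt (2 * pi * (s * g / (s + g)))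
      * exp (- m\<^sup>2 / (2 * (s + g)) + - (t - g / (g + s) * m)\<^sup>2 / (2 * (s * g / (s + g))))"
    unfolding exponent const ..
  also have "\<dots> = sqrt (s / (s + g)) * exp (- m\<^sup>2 / (2 * (s + g)))
      * normal_density (g / (g + s) * m) (sqrt (s * g / (s + g))) t"
    using s g unfolding exp_add by (simp add: normal_density_def)
  finally show ?thesis .
qed

section \<open>The posterior mean\<close>

lemma borel_measurable_vec_nth [measurable (raw)]:
  "f \<in> borel_measurable M \<Longrightarrow> (\<lambda>x. (f x :: real^'n) $ i) \<in> borel_measurable M"
  using measurable_compose[OF _ borel_measurable_nth] .

lemma (in prob_space) weighted_average_bounds:
  fixes D w :: "'a \<Rightarrow> real"
  assumes D: "integrable M D" "AE x in M. 0 < D x"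
    and w: "w \<in> borel_measurable M" "AE x in M. a \<le> w x \<and> w x \<le> b"
  shows "a \<le> (\<integral>x. w x * D x \<partial>M) / (\<integral>x. D x \<partial>M) \<and> (\<integral>x. w x * D x \<partial>M) / (\<integral>x. D x \<partial>M) \<le> b"
proof -
  have pos: "0 < (\<integral>x. D x \<partial>M)"
    using integral_less_AE_space[of "\<lambda>_. 0" D] D by (simp add: emeasure_space_1)
  have int: "integrable M (\<lambda>x. w x * D x)"
  proof (rule Bochner_Integration.integrable_bound)
    show "integrable M (\<lambda>x. (\<bar>a\<bar> + \<bar>b\<bar>) * D x)"
      using D by simp
    show "AE x in M. norm (w x * D x) \<le> norm ((\<bar>a\<bar> + \<bar>b\<bar>) * D x)"
      using D(2) w(2) by eventually_elim (auto simp: abs_mult intro!: mult_right_mono)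
  qed (use w D in measurable)
  have "AE x in M. a * D x \<le> w x * D x" "AE x in M. w x * D x \<le> b * D x"
    using D(2) w(2) by (auto elim!: eventually_mono[OF AE_conjI] intro: mult_right_mono)
  from this(1) have "(\<integral>x. a * D x \<partial>M) \<le> (\<integral>x. w x * D x \<partial>M)"
    by (rule integral_mono_AE[OF integrable_mult_right[OF D(1)] int])
  moreover from \<open>AE x in M. w x * D x \<le> b * D x\<close> have "(\<integral>x. w x * D x \<partial>M) \<le> (\<integral>x. b * D x \<partial>M)"
    by (rule integral_mono_AE[OF int integrable_mult_right[OF D(1)]])
  ultimately show ?thesis
    using pos by (simp add: pos_le_divide_eq pos_divide_le_eq)
qed

(* With lambda = n and an orthogonal design, the likelihood factorises around the OLS estimate m
   (ss_lik_slab_factor): lik_const is the factor free of beta, and evidence s g m is the integral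
   of the coordinate factor exp (- (b - m)^2 / (2 s)) against the N(0, g) slab density. *)
definition lik_const :: "nat \<Rightarrow> real \<Rightarrow> real \<Rightarrow> real" where
  "lik_const n R s = (1 / sqrt (2 * pi * (s * real n))) ^ n * exp (- R / (2 * (s * real n)))"

definition evidence :: "real \<Rightarrow> real \<Rightarrow> real \<Rightarrow> real" where
  "evidence s g m = sqrt (s / (s + g)) * exp (- m\<^sup>2 / (2 * (s + g)))"

definition marginal_lik :: "(nat \<Rightarrow> real^'k) \<Rightarrow> nat \<Rightarrow> (nat \<Rightarrow> real) \<Rightarrow> real^'k \<Rightarrow> real \<Rightarrow> real" where
  "marginal_lik X n z g s = lik_const n (rss X n z) s * (\<Prod>j\<in>UNIV. evidence s (g $ j) (ols_orth X n z $ j))"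

lemma evidence_pos: "s > 0 \<Longrightarrow> g > 0 \<Longrightarrow> evidence s g m > 0"
  by (simp add: evidence_def)

lemma evidence_le_one: "s > 0 \<Longrightarrow> g > 0 \<Longrightarrow> evidence s g m \<le> 1"
  unfolding evidence_def by (rule mult_le_one) auto

lemma lik_const_pos: "n > 0 \<Longrightarrow> s > 0 \<Longrightarrow> lik_const n R s > 0"
  by (simp add: lik_const_def)

lemma sqrt_power_mult_exp_le:
  fixes u R :: real
  assumes u: "u > 0" and R: "R > 0" and n: "n > 0"
  shows "sqrt u ^ n * exp (- (R * u / 2)) \<le> 1 + (2 * real n / R) ^ n"
proof (cases "u \<le> 1")
  case True
  then have "sqrt u ^ n * exp (- (R * u / 2)) \<le> 1 * 1"
    using R u by (intro mult_mono power_le_one) auto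
  then show ?thesis
    using R by (simp add: add_increasing2)
next
  case False
  then have "u \<le> u\<^sup>2"
    by (simp add: power2_eq_square)
  then have "sqrt u \<le> u"
    using u real_sqrt_le_mono[of u "u\<^sup>2"] by simp
  then have sqrt_le: "sqrt u ^ n \<le> u ^ n"
    using u by (intro power_mono) simp_all
  define t where "t = R * u / 2"
  have "t \<ge> 0"
    using R u by (simp add: t_def)
  then have "(t / real n) ^ n \<le> exp t"
    using n by (intro order_trans[OF power_mono exp_ge_one_plus_x_over_n_power_n]) auto
  then have "u ^ n \<le> (2 * real n / R) ^ n * exp t"
    using R n by (simp add: t_def power_divide power_mult_distrib field_simps)
  with sqrt_le have "sqrt u ^ n * exp (- t) \<le> (2 * real n / R) ^ n * exp t * exp (- t)"
    by (intro mult_right_mono) auto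
  then have "sqrt u ^ n * exp (- t) \<le> (2 * real n / R) ^ n"
    by (simp add: mult.assoc exp_minus_inverse)
  then show ?thesis
    by (simp add: t_def)
qed

lemma lik_const_le:
  assumes R: "R > 0" and n: "n > 0" and s: "s > 0"
  shows "lik_const n R s \<le> 1 + (2 * real n / R) ^ n"
proof -
  define u where "u = 1 / (s * real n)"
  have "0 < s * real n"
    using s n by simp
  then have "s * real n \<le> 2 * pi * (s * real n)"
    using pi_ge_two by (simp add: mult_le_cancel_right1)
  then have "1 / sqrt (2 * pi * (s * real n)) \<le> 1 / sqrt (s * real n)"
    using s n by (intro divide_left_mono real_sqrt_le_mono) auto
  then have "1 / sqrt (2 * pi * (s * real n)) \<le> sqrt u"
    by (simp add: u_def real_sqrt_divide)
  moreover have "- R / (2 * (s * real n)) = - (R * u / 2)"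
    by (simp add: u_def)
  ultimately have "lik_const n R s \<le> sqrt u ^ n * exp (- (R * u / 2))"
    unfolding lik_const_def using s n by (simp only:) (intro mult_right_mono power_mono; simp)
  also have "\<dots> \<le> 1 + (2 * real n / R) ^ n"
    using s n R by (intro sqrt_power_mult_exp_le) (simp_all add: u_def)
  finally show ?thesis .
qed

lemma marginal_lik_pos:
  "n > 0 \<Longrightarrow> s > 0 \<Longrightarrow> (\<And>j. g $ j > 0) \<Longrightarrow> marginal_lik X n z g s > 0"
  by (simp add: marginal_lik_def lik_const_pos evidence_pos prod_pos)

lemma marginal_lik_le:
  assumes "rss X n z > 0" "n > 0" "s > 0" "\<And>j. g $ j > 0"
  shows "marginal_lik X n z g s \<le> 1 + (2 * real n / rss X n z) ^ n"
proof -
  have "marginal_lik X n z g s \<le> lik_const n (rss X n z) s * 1"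
    unfolding marginal_lik_def using assms
    by (intro mult_left_mono prod_le_1) (auto intro: less_imp_le evidence_pos evidence_le_one lik_const_pos)
  also have "\<dots> \<le> 1 + (2 * real n / rss X n z) ^ n"
    using lik_const_le[OF assms(1-3)] by simp
  finally show ?thesis .
qed

lemma ss_lik_slab_factor:
  fixes X :: "nat \<Rightarrow> real^'k" and z :: "nat \<Rightarrow> real"
  assumes design: "gram X n = real n *\<^sub>R mat 1" and n: "n > 0" and s: "s > 0" and g: "\<And>j. g $ j > 0"
  defines "m \<equiv> ols_orth X n z"
  shows "ss_lik X n (real n) z b s * slab_dens g b
    = lik_const n (rss X n z) s * (\<Prod>j\<in>UNIV. evidence s (g $ j) (m $ j)
        * normal_density (g $ j / (g $ j + s) * m $ j) (sqrt (s * g $ j / (s + g $ j))) (b $ j))"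
proof -
  have "(sqrt (s * real n))\<^sup>2 = s * real n"
    using s by simp
  then have "ss_lik X n (real n) z b s
      = (\<Prod>i<n. 1 / sqrt (2 * pi * (s * real n)) * exp (- (z i - X i \<bullet> b)\<^sup>2 / (2 * (s * real n))))"
    unfolding ss_lik_def normal_density_def by simp
  also have "\<dots> = (1 / sqrt (2 * pi * (s * real n))) ^ n
      * exp (\<Sum>i<n. - (z i - X i \<bullet> b)\<^sup>2 / (2 * (s * real n)))"
    unfolding prod.distrib by (simp add: exp_sum)
  also have "(\<Sum>i<n. - (z i - X i \<bullet> b)\<^sup>2 / (2 * (s * real n)))
      = - (\<Sum>i<n. (z i - X i \<bullet> b)\<^sup>2) / (2 * (s * real n))"
    by (simp add: sum_divide_distrib sum_negf)
  also have "- (\<Sum>i<n. (z i - X i \<bullet> b)\<^sup>2) / (2 * (s * real n))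
      = - rss X n z / (2 * (s * real n)) + (\<Sum>j\<in>UNIV. - (b $ j - m $ j)\<^sup>2 / (2 * s))"
    using s n by (simp add: sum_sq_resid_decomp[OF design n] m_def field_simps
        sum_divide_distrib[symmetric] sum_negf)
  also have "(1 / sqrt (2 * pi * (s * real n))) ^ n
      * exp (- rss X n z / (2 * (s * real n)) + (\<Sum>j\<in>UNIV. - (b $ j - m $ j)\<^sup>2 / (2 * s)))
      = lik_const n (rss X n z) s * (\<Prod>j\<in>UNIV. exp (- (b $ j - m $ j)\<^sup>2 / (2 * s)))"
    unfolding lik_const_def exp_add exp_sum[OF finite_class.finite_UNIV] by (simp only: mult.assoc)
  finally have "ss_lik X n (real n) z b s
      = lik_const n (rss X n z) s * (\<Prod>j\<in>UNIV. exp (- (b $ j - m $ j)\<^sup>2 / (2 * s)))" .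
  then show ?thesis
    using normal_density_conjugate[OF s g]
    by (simp add: slab_dens_def evidence_def prod.distrib[symmetric] mult.assoc)
qed

lemma integral_ss_lik_slab:
  fixes X :: "nat \<Rightarrow> real^'k"
  assumes design: "gram X n = real n *\<^sub>R mat 1" and n: "n > 0" and s: "s > 0" and g: "\<And>j. g $ j > 0"
  shows "(\<integral>b. ss_lik X n (real n) z b s * slab_dens g b \<partial>lborel) = marginal_lik X n z g s"
proof -
  let ?m = "ols_orth X n z"
  define f where "f j t = evidence s (g $ j) (?m $ j)
    * normal_density (g $ j / (g $ j + s) * ?m $ j) (sqrt (s * g $ j / (s + g $ j))) t" for j t
  have sd: "sqrt (s * g $ j / (s + g $ j)) > 0" for j
    using s g[of j] by simp
  have "integrable lborel (f j)" "(\<integral>t. f j t \<partial>lborel) = evidence s (g $ j) (?m $ j)" for j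
    using sd[of j] by (simp_all add: f_def[abs_def])
  moreover have "(\<integral>b. ss_lik X n (real n) z b s * slab_dens g b \<partial>lborel)
      = (\<integral>b. lik_const n (rss X n z) s * (\<Prod>j\<in>UNIV. f j (b $ j)) \<partial>lborel)"
    unfolding ss_lik_slab_factor[OF design n s g] f_def ..
  ultimately show ?thesis
    by (simp add: integral_lborel_prod_vec marginal_lik_def)
qed

lemma integral_component_ss_lik_slab:
  fixes X :: "nat \<Rightarrow> real^'k"
  assumes design: "gram X n = real n *\<^sub>R mat 1" and n: "n > 0" and s: "s > 0" and g: "\<And>j. g $ j > 0"
  shows "(\<integral>b. b $ k * ss_lik X n (real n) z b s * slab_dens g b \<partial>lborel)
    = g $ k / (g $ k + s) * ols_orth X n z $ k * marginal_lik X n z g s"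
proof -
  let ?m = "ols_orth X n z" and ?L = "lik_const n (rss X n z) s"
  define f where "f j t = evidence s (g $ j) (?m $ j)
    * normal_density (g $ j / (g $ j + s) * ?m $ j) (sqrt (s * g $ j / (s + g $ j))) t" for j t
  have sd: "sqrt (s * g $ j / (s + g $ j)) > 0" for j
    using s g[of j] by simp
  have int_f: "integrable lborel (f j)" and f_int: "(\<integral>t. f j t \<partial>lborel) = evidence s (g $ j) (?m $ j)" for j
    using sd[of j] by (simp_all add: f_def[abs_def])
  have "(\<lambda>t. t * f k t) = (\<lambda>t. evidence s (g $ k) (?m $ k)
      * (normal_density (g $ k / (g $ k + s) * ?m $ k) (sqrt (s * g $ k / (s + g $ k))) t * t))"
    by (simp add: f_def fun_eq_iff mult_ac)
  then have int_fk: "integrable lborel (\<lambda>t. t * f k t)"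
    and fk_int: "(\<integral>t. t * f k t \<partial>lborel) = evidence s (g $ k) (?m $ k) * (g $ k / (g $ k + s) * ?m $ k)"
    using integrable_normal_moment_nz_1[OF sd[of k]] integral_normal_moment_nz_1[OF sd[of k]] by simp_all
  have factor: "b $ k * ss_lik X n (real n) z b s * slab_dens g b = ?L * (b $ k * (\<Prod>j\<in>UNIV. f j (b $ j)))"
    for b
    unfolding mult.assoc ss_lik_slab_factor[OF design n s g] f_def by (simp only: mult_ac)
  have "(\<integral>b. b $ k * ss_lik X n (real n) z b s * slab_dens g b \<partial>lborel)
      = ?L * ((\<integral>t. t * f k t \<partial>lborel) * (\<Prod>j\<in>UNIV - {k}. \<integral>t. f j t \<partial>lborel))"
    unfolding factor integral_mult_right_zero integral_lborel_component_prod_vec[of f, OF int_f int_fk] ..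
  also have "\<dots> = g $ k / (g $ k + s) * ?m $ k * marginal_lik X n z g s"
    by (simp add: fk_int f_int marginal_lik_def prod.remove[of UNIV k] mult_ac)
  finally show ?thesis .
qed

lemma shrinkage_factor_bounds:
  fixes eta0 s0 g s :: real
  assumes "0 < eta0" "eta0 \<le> g" "0 < s" "s \<le> s0"
  shows "eta0 / (eta0 + s0) \<le> g / (g + s)" "g / (g + s) \<le> 1"
proof -
  have "eta0 * s \<le> g * s0"
    using assms by (intro mult_mono) auto
  then show "eta0 / (eta0 + s0) \<le> g / (g + s)"
    using assms by (simp add: field_simps)
  show "g / (g + s) \<le> 1"
    using assms by simp
qed

locale spike_slab_prior =
  fixes pr :: "(real^'k) measure" and mu :: "real measure" and eta0 s0 :: real
  assumes pr_prob: "prob_space pr" and pr_sets: "sets pr = sets borel"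
    and pr_supp: "AE g in pr. \<forall>j. eta0 \<le> g $ j" and eta0_pos: "0 < eta0"
    and mu_prob: "prob_space mu" and mu_sets: "sets mu = sets borel"
    and mu_pos: "AE s in mu. 0 < s" and mu_supp: "AE s in mu. s \<le> s0" and s0_pos: "0 < s0"
begin

lemma pair_prob_space: "pair_prob_space pr mu"
  using pr_prob mu_prob by (simp add: pair_prob_space_def pair_sigma_finite_def prob_space_imp_sigma_finite)

lemma sets_prior [measurable_cong]: "sets (pr \<Otimes>\<^sub>M mu) = sets (borel \<Otimes>\<^sub>M borel)"
  using pr_sets mu_sets by (rule sets_pair_measure_cong)

lemma AE_prior_support: "AE gs in pr \<Otimes>\<^sub>M mu. (\<forall>j. eta0 \<le> fst gs $ j) \<and> 0 < snd gs \<and> snd gs \<le> s0"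
proof (rule pair_sigma_finite.AE_pair_measure)
  show "pair_sigma_finite pr mu"
    using pair_prob_space by (simp add: pair_prob_space_def)
  show "{gs \<in> space (pr \<Otimes>\<^sub>M mu). (\<forall>j. eta0 \<le> fst gs $ j) \<and> 0 < snd gs \<and> snd gs \<le> s0} \<in> sets (pr \<Otimes>\<^sub>M mu)"
    by measurable
  show "AE g in pr. AE s in mu. (\<forall>j. eta0 \<le> fst (g, s) $ j) \<and> 0 < snd (g, s) \<and> snd (g, s) \<le> s0"
    using pr_supp AE_conjI[OF mu_pos mu_supp] by (auto elim!: eventually_mono)
qed

(* Up to normalisation, marginal_lik is the posterior density of (gamma, sigma^2) with respect to
   pr \<Otimes>\<^sub>M mu, so the quotient is the posterior mean of the shrinkage factor. *)
lemma post_mean_eq_average_shrinkage: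
  fixes X :: "nat \<Rightarrow> real^'k" and z :: "nat \<Rightarrow> real"
  assumes design: "gram X n = real n *\<^sub>R mat 1" and n: "n > 0"
  shows "post_mean pr mu (real n) X n z $ k
    = (\<integral>gs. fst gs $ k / (fst gs $ k + snd gs) * marginal_lik X n z (fst gs) (snd gs) \<partial>(pr \<Otimes>\<^sub>M mu))
      / (\<integral>gs. marginal_lik X n z (fst gs) (snd gs) \<partial>(pr \<Otimes>\<^sub>M mu)) * ols_orth X n z $ k"
proof -
  have [measurable]:
    "(\<lambda>p. ss_lik X n (real n) z (snd p) (snd (fst p)) * slab_dens (fst (fst p)) (snd p))
      \<in> borel_measurable ((pr \<Otimes>\<^sub>M mu) \<Otimes>\<^sub>M lborel)"
    "(\<lambda>p. snd p $ k * ss_lik X n (real n) z (snd p) (snd (fst p)) * slab_dens (fst (fst p)) (snd p))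
      \<in> borel_measurable ((pr \<Otimes>\<^sub>M mu) \<Otimes>\<^sub>M lborel)"
    "(\<lambda>gs. marginal_lik X n z (fst gs) (snd gs)) \<in> borel_measurable (pr \<Otimes>\<^sub>M mu)"
    unfolding ss_lik_def slab_dens_def normal_density_def marginal_lik_def lik_const_def evidence_def
    by measurable
  then have [measurable]:
    "(\<lambda>(gs, b). ss_lik X n (real n) z b (snd gs) * slab_dens (fst gs) b)
      \<in> borel_measurable ((pr \<Otimes>\<^sub>M mu) \<Otimes>\<^sub>M lborel)"
    "(\<lambda>(gs, b). b $ k * ss_lik X n (real n) z b (snd gs) * slab_dens (fst gs) b)
      \<in> borel_measurable ((pr \<Otimes>\<^sub>M mu) \<Otimes>\<^sub>M lborel)"
    by (simp_all add: split_beta')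
  have AE_integrals: "AE gs in pr \<Otimes>\<^sub>M mu.
      (\<integral>b. ss_lik X n (real n) z b (snd gs) * slab_dens (fst gs) b \<partial>lborel)
      = marginal_lik X n z (fst gs) (snd gs)
    \<and> (\<integral>b. b $ k * ss_lik X n (real n) z b (snd gs) * slab_dens (fst gs) b \<partial>lborel)
      = ols_orth X n z $ k * (fst gs $ k / (fst gs $ k + snd gs) * marginal_lik X n z (fst gs) (snd gs))"
    using AE_prior_support
  proof eventually_elim
    case (elim gs)
    then have "snd gs > 0" "\<And>j. fst gs $ j > 0"
      using eta0_pos by (auto intro: less_le_trans)
    then show ?case
      by (simp add: integral_ss_lik_slab[OF design n] integral_component_ss_lik_slab[OF design n])
  qed
  have "(\<integral>gs. (\<integral>b. ss_lik X n (real n) z b (snd gs) * slab_dens (fst gs) b \<partial>lborel) \<partial>(pr \<Otimes>\<^sub>M mu))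
      = (\<integral>gs. marginal_lik X n z (fst gs) (snd gs) \<partial>(pr \<Otimes>\<^sub>M mu))"
    using AE_integrals by (intro integral_cong_AE) (auto elim: eventually_mono)
  moreover have
    "(\<integral>gs. (\<integral>b. b $ k * ss_lik X n (real n) z b (snd gs) * slab_dens (fst gs) b \<partial>lborel) \<partial>(pr \<Otimes>\<^sub>M mu))
      = ols_orth X n z $ k
        * (\<integral>gs. fst gs $ k / (fst gs $ k + snd gs) * marginal_lik X n z (fst gs) (snd gs) \<partial>(pr \<Otimes>\<^sub>M mu))"
    unfolding integral_mult_right_zero[symmetric]
    using AE_integrals by (intro integral_cong_AE) (auto elim: eventually_mono)
  ultimately show ?thesis
    by (simp add: post_mean_def)
qed

lemma post_mean_shrinkage:
  fixes X :: "nat \<Rightarrow> real^'k" and z :: "nat \<Rightarrow> real"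
  assumes design: "gram X n = real n *\<^sub>R mat 1" and n: "n > 0" and rss_pos: "rss X n z > 0"
  obtains \<rho> where "eta0 / (eta0 + s0) \<le> \<rho>" "\<rho> \<le> 1"
    and "post_mean pr mu (real n) X n z $ k = \<rho> * ols_orth X n z $ k"
proof -
  interpret PM: pair_prob_space pr mu
    by (rule pair_prob_space)
  let ?D = "\<lambda>gs. marginal_lik X n z (fst gs) (snd gs)" and ?w = "\<lambda>gs. fst gs $ k / (fst gs $ k + snd gs)"
  have AE_bounds: "AE gs in pr \<Otimes>\<^sub>M mu. 0 < ?D gs \<and> ?D gs \<le> 1 + (2 * real n / rss X n z) ^ n
      \<and> eta0 / (eta0 + s0) \<le> ?w gs \<and> ?w gs \<le> 1"
    using AE_prior_support
  proof eventually_elim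
    case (elim gs)
    then have s: "snd gs > 0" and g: "\<And>j. fst gs $ j > 0"
      using eta0_pos by (auto intro: less_le_trans)
    with elim show ?case
      using shrinkage_factor_bounds[OF eta0_pos, of "fst gs $ k" "snd gs" s0]
        marginal_lik_pos[OF n s g] marginal_lik_le[OF rss_pos n s g]
      by auto
  qed
  have [measurable]: "?D \<in> borel_measurable (pr \<Otimes>\<^sub>M mu)" "?w \<in> borel_measurable (pr \<Otimes>\<^sub>M mu)"
    unfolding marginal_lik_def lik_const_def evidence_def by measurable
  have "AE gs in pr \<Otimes>\<^sub>M mu. norm (?D gs) \<le> 1 + (2 * real n / rss X n z) ^ n"
    using AE_bounds by eventually_elim auto
  then have "integrable (pr \<Otimes>\<^sub>M mu) ?D"
    by (rule PM.integrable_const_bound) measurable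
  then have "eta0 / (eta0 + s0) \<le> (\<integral>gs. ?w gs * ?D gs \<partial>(pr \<Otimes>\<^sub>M mu)) / (\<integral>gs. ?D gs \<partial>(pr \<Otimes>\<^sub>M mu))
      \<and> (\<integral>gs. ?w gs * ?D gs \<partial>(pr \<Otimes>\<^sub>M mu)) / (\<integral>gs. ?D gs \<partial>(pr \<Otimes>\<^sub>M mu)) \<le> 1"
    using AE_bounds by (intro PM.P.weighted_average_bounds) (auto elim: eventually_mono)
  then show ?thesis
    using post_mean_eq_average_shrinkage[OF design n] by (intro that) auto
qed

lemma borel_measurable_post_mean [measurable]:
  fixes X :: "nat \<Rightarrow> real^'k" and z :: "'b \<Rightarrow> nat \<Rightarrow> real"
  assumes [measurable]: "\<And>i. (\<lambda>\<omega>. z \<omega> i) \<in> borel_measurable N"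
  shows "(\<lambda>\<omega>. post_mean pr mu lam X n (z \<omega>) $ k) \<in> borel_measurable N"
proof -
  interpret PM: pair_prob_space pr mu
    by (rule pair_prob_space)
  have "(\<lambda>p. ss_lik X n lam (z (fst (fst p))) (snd p) (snd (snd (fst p)))
        * slab_dens (fst (snd (fst p))) (snd p)) \<in> borel_measurable ((N \<Otimes>\<^sub>M (pr \<Otimes>\<^sub>M mu)) \<Otimes>\<^sub>M lborel)"
    "(\<lambda>p. snd p $ k * ss_lik X n lam (z (fst (fst p))) (snd p) (snd (snd (fst p)))
        * slab_dens (fst (snd (fst p))) (snd p)) \<in> borel_measurable ((N \<Otimes>\<^sub>M (pr \<Otimes>\<^sub>M mu)) \<Otimes>\<^sub>M lborel)"
    unfolding ss_lik_def slab_dens_def normal_density_def by measurable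
  then have "(\<lambda>((\<omega>, gs), b). ss_lik X n lam (z \<omega>) b (snd gs) * slab_dens (fst gs) b)
      \<in> borel_measurable ((N \<Otimes>\<^sub>M (pr \<Otimes>\<^sub>M mu)) \<Otimes>\<^sub>M lborel)"
    "(\<lambda>((\<omega>, gs), b). b $ k * ss_lik X n lam (z \<omega>) b (snd gs) * slab_dens (fst gs) b)
      \<in> borel_measurable ((N \<Otimes>\<^sub>M (pr \<Otimes>\<^sub>M mu)) \<Otimes>\<^sub>M lborel)"
    by (simp_all add: split_beta')
  from this[THEN lborel.borel_measurable_lebesgue_integral]
  show ?thesis
    unfolding post_mean_def vec_lambda_beta
    by (intro borel_measurable_divide PM.borel_measurable_lebesgue_integral) (simp_all add: split_beta')
qed

end

section \<open>Chebyshev bounds for the noise\<close>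

lemma (in prob_space) indep_var_of_indep_vars:
  assumes indep: "indep_vars M' Z I" and "i \<in> I" "j \<in> I" "i \<noteq> j"
  shows "indep_var (M' i) (Z i) (M' j) (Z j)"
proof -
  have "indep_var (M' i) ((\<lambda>f. f i) \<circ> (\<lambda>\<omega>. restrict (\<lambda>i. Z i \<omega>) {i}))
      (M' j) ((\<lambda>f. f j) \<circ> (\<lambda>\<omega>. restrict (\<lambda>i. Z i \<omega>) {j}))"
    using assms by (intro indep_var_compose[OF indep_var_restrict[OF indep]]) auto
  then show ?thesis
    by (simp add: comp_def)
qed

lemma (in prob_space)
  fixes Z :: "nat \<Rightarrow> 'a \<Rightarrow> real"
  assumes indep: "indep_vars (\<lambda>_. borel) Z UNIV"
    and sq: "\<And>i. integrable M (\<lambda>\<omega>. (Z i \<omega>)\<^sup>2)" and mean: "\<And>i. expectation (Z i) = 0"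
  shows integrable_weighted_sum_sq: "integrable M (\<lambda>\<omega>. (\<Sum>i<n. a i * Z i \<omega>)\<^sup>2)"
    and expectation_weighted_sum_sq:
      "expectation (\<lambda>\<omega>. (\<Sum>i<n. a i * Z i \<omega>)\<^sup>2) = (\<Sum>i<n. (a i)\<^sup>2 * expectation (\<lambda>\<omega>. (Z i \<omega>)\<^sup>2))"
proof -
  have meas: "Z i \<in> borel_measurable M" for i
    using indep by (auto simp: indep_vars_def)
  have int: "integrable M (Z i)" for i
    using square_integrable_imp_integrable[OF meas sq] .
  have prod: "integrable M (\<lambda>\<omega>. Z i \<omega> * Z j \<omega>) \<and>
      expectation (\<lambda>\<omega>. Z i \<omega> * Z j \<omega>) = (if i = j then expectation (\<lambda>\<omega>. (Z i \<omega>)\<^sup>2) else 0)"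
    for i j
  proof (cases "i = j")
    case False
    then have "indep_var borel (Z i) borel (Z j)"
      using indep_var_of_indep_vars[OF indep] by simp
    then show ?thesis
      using False indep_var_integrable[OF _ int int] indep_var_lebesgue_integral[OF _ int int] mean by simp
  qed (use sq in \<open>simp add: power2_eq_square\<close>)
  note int_prod = prod[THEN conjunct1] and expectation_prod = prod[THEN conjunct2]
  have sq_sum: "(\<Sum>i<n. a i * Z i \<omega>)\<^sup>2 = (\<Sum>i<n. \<Sum>j<n. a i * a j * (Z i \<omega> * Z j \<omega>))" for \<omega>
    by (simp add: power2_eq_square sum_product mult_ac)
  show "integrable M (\<lambda>\<omega>. (\<Sum>i<n. a i * Z i \<omega>)\<^sup>2)"
    unfolding sq_sum by (intro Bochner_Integration.integrable_sum integrable_mult_right int_prod)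
  have "expectation (\<lambda>\<omega>. (\<Sum>i<n. a i * Z i \<omega>)\<^sup>2)
      = (\<Sum>i<n. \<Sum>j<n. a i * a j * expectation (\<lambda>\<omega>. Z i \<omega> * Z j \<omega>))"
    unfolding sq_sum by (simp add: int_prod)
  also have "\<dots> = (\<Sum>i<n. (a i)\<^sup>2 * expectation (\<lambda>\<omega>. (Z i \<omega>)\<^sup>2))"
    unfolding expectation_prod by (simp add: if_distrib power2_eq_square cong: if_cong)
  finally show "expectation (\<lambda>\<omega>. (\<Sum>i<n. a i * Z i \<omega>)\<^sup>2) = (\<Sum>i<n. (a i)\<^sup>2 * expectation (\<lambda>\<omega>. (Z i \<omega>)\<^sup>2))" .
qed

lemma (in prob_space) prob_weighted_sum_sq_ge:
  fixes Z :: "nat \<Rightarrow> 'a \<Rightarrow> real"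
  assumes indep: "indep_vars (\<lambda>_. borel) Z UNIV"
    and sq: "\<And>i. integrable M (\<lambda>\<omega>. (Z i \<omega>)\<^sup>2)" and mean: "\<And>i. expectation (Z i) = 0"
    and var: "\<And>i. expectation (\<lambda>\<omega>. (Z i \<omega>)\<^sup>2) \<le> v" and c: "c > 0"
  shows "prob {\<omega> \<in> space M. c \<le> (\<Sum>i<n. a i * Z i \<omega>)\<^sup>2} \<le> (\<Sum>i<n. (a i)\<^sup>2) * v / c"
proof -
  have "prob {\<omega> \<in> space M. c \<le> (\<Sum>i<n. a i * Z i \<omega>)\<^sup>2} \<le> expectation (\<lambda>\<omega>. (\<Sum>i<n. a i * Z i \<omega>)\<^sup>2) / c"
    by (rule integral_Markov_inequality_measure[OF integrable_weighted_sum_sq[OF indep sq mean] _ _ c,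
          where A = "space M"]) auto
  also have "\<dots> \<le> (\<Sum>i<n. (a i)\<^sup>2) * v / c"
    unfolding expectation_weighted_sum_sq[OF indep sq mean] sum_distrib_right
    using c var by (intro divide_right_mono sum_mono mult_left_mono) auto
  finally show ?thesis .
qed

lemma (in prob_space) integrable_sq_of_integrable_pow4:
  fixes X :: "'a \<Rightarrow> real"
  assumes "X \<in> borel_measurable M" "integrable M (\<lambda>\<omega>. (X \<omega>) ^ 4)"
  shows "integrable M (\<lambda>\<omega>. (X \<omega>)\<^sup>2)"
proof (rule Bochner_Integration.integrable_bound)
  have "t\<^sup>2 \<le> 1 + t ^ 4" for t :: real
    using sum_squares_ge_zero[of "t\<^sup>2 - 1/2" 0] by (simp add: power2_eq_square power4_eq_xxxx algebra_simps)
  then show "AE \<omega> in M. norm ((X \<omega>)\<^sup>2) \<le> norm (1 + (X \<omega>) ^ 4)"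
    by simp
qed (use assms in auto)

locale centered_noise = prob_space +
  fixes eps :: "nat \<Rightarrow> 'a \<Rightarrow> real" and v B :: real
  assumes eps_indep: "indep_vars (\<lambda>_. borel) eps UNIV"
    and eps_mean: "\<And>i. expectation (eps i) = 0"
    and eps_var: "\<And>i. expectation (\<lambda>\<omega>. (eps i \<omega>)\<^sup>2) = v"
    and eps_pow4_integrable: "\<And>i. integrable M (\<lambda>\<omega>. (eps i \<omega>) ^ 4)"
    and eps_pow4_bound: "\<And>i. expectation (\<lambda>\<omega>. (eps i \<omega>) ^ 4) \<le> B"
begin

lemma eps_measurable [measurable]: "eps i \<in> borel_measurable M"
  using eps_indep by (auto simp: indep_vars_def)

lemma eps_sq_integrable: "integrable M (\<lambda>\<omega>. (eps i \<omega>)\<^sup>2)"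
  by (rule integrable_sq_of_integrable_pow4[OF eps_measurable eps_pow4_integrable])

lemma prob_weighted_noise_sq_ge:
  "c > 0 \<Longrightarrow> prob {\<omega> \<in> space M. c \<le> (\<Sum>i<n. a i * eps i \<omega>)\<^sup>2} \<le> (\<Sum>i<n. (a i)\<^sup>2) * v / c"
  by (rule prob_weighted_sum_sq_ge[OF eps_indep eps_sq_integrable eps_mean]) (simp add: eps_var)

lemma prob_noise_energy_deviation_ge:
  assumes c: "c > 0"
  shows "prob {\<omega> \<in> space M. c \<le> \<bar>(\<Sum>i<n. (eps i \<omega>)\<^sup>2) - real n * v\<bar>} \<le> real n * B / c\<^sup>2"
proof -
  define W where "W i \<omega> = (eps i \<omega>)\<^sup>2 - v" for i \<omega>
  have W_sq: "(W i \<omega>)\<^sup>2 = (eps i \<omega>) ^ 4 - 2 * v * (eps i \<omega>)\<^sup>2 + v\<^sup>2" for i \<omega>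
    by (simp add: W_def power2_eq_square power4_eq_xxxx algebra_simps)
  have "indep_vars (\<lambda>_. borel) W UNIV"
    unfolding W_def by (rule indep_vars_compose2[OF eps_indep]) measurable
  moreover have "integrable M (\<lambda>\<omega>. (W i \<omega>)\<^sup>2)" for i
    unfolding W_sq using eps_pow4_integrable eps_sq_integrable by simp
  moreover have "expectation (W i) = 0" for i
    unfolding W_def using eps_sq_integrable[of i] by (simp add: eps_var prob_space)
  moreover have "expectation (\<lambda>\<omega>. (W i \<omega>)\<^sup>2) \<le> B" for i
  proof -
    have "expectation (\<lambda>\<omega>. (W i \<omega>)\<^sup>2) = expectation (\<lambda>\<omega>. (eps i \<omega>) ^ 4) - v\<^sup>2"
      unfolding W_sq using eps_pow4_integrable[of i] eps_sq_integrable[of i]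
      by (simp add: eps_var prob_space power2_eq_square[of v])
    then show ?thesis
      using eps_pow4_bound[of i] zero_le_power2[of v] by linarith
  qed
  ultimately have "prob {\<omega> \<in> space M. c\<^sup>2 \<le> (\<Sum>i<n. 1 * W i \<omega>)\<^sup>2} \<le> (\<Sum>i<n. 1\<^sup>2) * B / c\<^sup>2"
    using c by (intro prob_weighted_sum_sq_ge) auto
  moreover have "c \<le> \<bar>(\<Sum>i<n. (eps i \<omega>)\<^sup>2) - real n * v\<bar> \<longleftrightarrow> c\<^sup>2 \<le> (\<Sum>i<n. 1 * W i \<omega>)\<^sup>2" for \<omega>
    using c by (simp add: W_def sum_subtractf abs_le_square_iff[symmetric])
  ultimately show ?thesis
    by simp
qed

end

section \<open>Correct selection on a good noise event\<close>

lemma sigma_hat_sq_bounds: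
  fixes X :: "nat \<Rightarrow> real^'k" and e :: "nat \<Rightarrow> real"
  assumes design: "gram X n = real n *\<^sub>R mat 1" and nK: "2 * CARD('k) \<le> n" and v: "v > 0"
    and S: "\<bar>(\<Sum>i<n. (e i)\<^sup>2) - real n * v\<bar> < real n * v / 2"
    and u: "ols_orth X n e \<bullet> ols_orth X n e < v / 4"
  shows "v / 4 < sigma_hat_sq X n (\<lambda>i. X i \<bullet> b + e i)"
    and "sigma_hat_sq X n (\<lambda>i. X i \<bullet> b + e i) < 3 * v"
proof -
  let ?K = "real CARD('k)" and ?V = "real n * (ols_orth X n e \<bullet> ols_orth X n e)"
  have K: "?K > 0" "2 * ?K \<le> real n"
    using nK by simp_all
  have n: "n > 0"
    using nK zero_less_card_finite[where 'a = 'k] by linarith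
  have V: "0 \<le> ?V" "?V < real n * v / 4"
    using u n by simp_all
  have sh: "sigma_hat_sq X n (\<lambda>i. X i \<bullet> b + e i) = ((\<Sum>i<n. (e i)\<^sup>2) - ?V) / (real n - ?K)"
    by (simp add: sigma_hat_sq_eq_rss[OF design n] rss_add_design[OF design n] rss_eq[OF design n])
  have SV: "real n * v / 4 < (\<Sum>i<n. (e i)\<^sup>2) - ?V"
    using S V(2) unfolding abs_less_iff by linarith
  moreover have "0 < real n * v / 4"
    using n v by simp
  ultimately have SV0: "0 \<le> (\<Sum>i<n. (e i)\<^sup>2) - ?V"
    by linarith
  have nK': "0 < real n - ?K" "real n - ?K \<le> real n" "real n / 2 \<le> real n - ?K"
    using K by linarith+
  have "v / 4 < ((\<Sum>i<n. (e i)\<^sup>2) - ?V) / real n"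
    using SV n by (simp add: field_simps)
  also have "\<dots> \<le> ((\<Sum>i<n. (e i)\<^sup>2) - ?V) / (real n - ?K)"
    using SV0 nK' by (intro divide_left_mono) auto
  finally show "v / 4 < sigma_hat_sq X n (\<lambda>i. X i \<bullet> b + e i)"
    unfolding sh .
  have "((\<Sum>i<n. (e i)\<^sup>2) - ?V) / (real n - ?K) < (3 / 2 * (real n * v)) / (real n - ?K)"
    using S V(1) nK'(1) unfolding abs_less_iff by (intro divide_strict_right_mono) linarith+
  also have "\<dots> \<le> (3 / 2 * (real n * v)) / (real n / 2)"
    using nK' n v by (intro divide_left_mono) auto
  also have "\<dots> = 3 * v"
    using n by simp
  finally show "sigma_hat_sq X n (\<lambda>i. X i \<bullet> b + e i) < 3 * v"
    unfolding sh .
qed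

lemma scaled_noise_below_threshold:
  fixes u sh v C :: real
  assumes v: "v > 0" and C: "C > 0" and sh: "v / 4 < sh" and u: "real n * u\<^sup>2 < v * C\<^sup>2 / 4"
  shows "sqrt (real n) / sqrt sh * \<bar>u\<bar> < C"
proof -
  have "(sqrt (real n) / sqrt sh * \<bar>u\<bar>)\<^sup>2 = real n * u\<^sup>2 / sh"
    using v sh by (simp add: power_mult_distrib power_divide)
  also have "\<dots> \<le> real n * u\<^sup>2 / (v / 4)"
    using v sh by (intro divide_left_mono) auto
  also have "\<dots> < (v * C\<^sup>2 / 4) / (v / 4)"
    using u v by (intro divide_strict_right_mono) auto
  also have "\<dots> = C\<^sup>2"
    using v by simp
  finally show ?thesis
    using C by (rule power2_less_imp_less[OF _ less_imp_le])
qed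

lemma scaled_signal_above_threshold:
  fixes b u sh v C c0 :: real
  assumes n: "n > 0" and v: "v > 0" and c0: "c0 > 0" and sh: "0 < sh" "sh < 3 * v"
    and u: "\<bar>u\<bar> < \<bar>b\<bar> / 2" and C: "C / sqrt (real n) < c0 * \<bar>b\<bar> / (2 * sqrt (3 * v))"
  shows "C < c0 * (sqrt (real n) / sqrt sh * \<bar>b + u\<bar>)"
proof -
  have "\<bar>b\<bar> \<le> \<bar>b + u\<bar> + \<bar>u\<bar>"
    using abs_triangle_ineq[of "b + u" "- u"] by simp
  with u have b: "\<bar>b\<bar> / 2 \<le> \<bar>b + u\<bar>"
    by linarith
  have "C < c0 * (sqrt (real n) / sqrt (3 * v) * (\<bar>b\<bar> / 2))"
    using C n by (simp add: divide_less_eq field_simps)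
  also have "\<dots> \<le> c0 * (sqrt (real n) / sqrt sh * \<bar>b + u\<bar>)"
    using n v c0 sh b by (intro mult_left_mono mult_mono divide_left_mono) auto
  finally show ?thesis .
qed

context spike_slab_prior
begin

lemma abs_post_mean_rescaled:
  fixes X :: "nat \<Rightarrow> real^'k" and e :: "nat \<Rightarrow> real" and \<beta> :: "real^'k"
  assumes design: "gram X n = real n *\<^sub>R mat 1" and nK: "CARD('k) < n"
    and sh: "0 < sigma_hat_sq X n (\<lambda>i. X i \<bullet> \<beta> + e i)"
  obtains \<rho> where "eta0 / (eta0 + s0) \<le> \<rho>" "\<rho> \<le> 1"
    and "\<bar>post_mean pr mu (real n) X n (rescaled X n (\<lambda>i. X i \<bullet> \<beta> + e i)) $ k\<bar>
      = \<rho> * (sqrt (real n) / sqrt (sigma_hat_sq X n (\<lambda>i. X i \<bullet> \<beta> + e i)) * \<bar>\<beta> $ k + ols_orth X n e $ k\<bar>)"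
proof -
  define Y where "Y = (\<lambda>i. X i \<bullet> \<beta> + e i)"
  define c where "c = sqrt (real n) / sqrt (sigma_hat_sq X n Y)"
  have n: "n > 0"
    using nK by simp
  have c: "c > 0"
    using n sh by (simp add: c_def Y_def)
  have resc: "rescaled X n Y = (\<lambda>i. c * Y i)"
    by (simp add: rescaled_def c_def fun_eq_iff)
  have "0 < rss X n Y / (real n - real CARD('k))"
    using sh by (simp add: sigma_hat_sq_eq_rss[OF design n] Y_def)
  then have "rss X n Y > 0"
    using nK by (simp add: zero_less_divide_iff)
  then have "rss X n (rescaled X n Y) > 0"
    using c by (simp add: resc rss_scale)
  then obtain \<rho> where \<rho>: "eta0 / (eta0 + s0) \<le> \<rho>" "\<rho> \<le> 1"
    and pm: "post_mean pr mu (real n) X n (rescaled X n Y) $ k = \<rho> * ols_orth X n (rescaled X n Y) $ k"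
    by (rule post_mean_shrinkage[OF design n])
  have "ols_orth X n (rescaled X n Y) = c *\<^sub>R (\<beta> + ols_orth X n e)"
    unfolding resc by (simp add: Y_def ols_orth_scale ols_orth_add ols_orth_design[OF design n])
  moreover have "0 \<le> \<rho>"
    using \<rho>(1) eta0_pos s0_pos by (auto intro: order_trans[rotated])
  ultimately have "\<bar>post_mean pr mu (real n) X n (rescaled X n Y) $ k\<bar>
      = \<rho> * (c * \<bar>\<beta> $ k + ols_orth X n e $ k\<bar>)"
    using pm c by (simp add: abs_mult)
  then show ?thesis
    unfolding Y_def c_def by (rule that[OF \<rho>])
qed

lemma model_hat_eq_model_true:
  fixes X :: "nat \<Rightarrow> real^'k" and e :: "nat \<Rightarrow> real" and \<beta> :: "real^'k"
  assumes design: "gram X n = real n *\<^sub>R mat 1" and nK: "2 * CARD('k) \<le> n"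
    and v: "v > 0" and C: "C > 0"
    and S: "\<bar>(\<Sum>i<n. (e i)\<^sup>2) - real n * v\<bar> < real n * v / 2"
    and u_small: "ols_orth X n e \<bullet> ols_orth X n e < v / 4"
    and u_noise: "\<And>j. real n * (ols_orth X n e $ j)\<^sup>2 < v * C\<^sup>2 / 4"
    and u_signal: "\<And>j. \<beta> $ j \<noteq> 0 \<Longrightarrow> \<bar>ols_orth X n e $ j\<bar> < \<bar>\<beta> $ j\<bar> / 2"
    and C_signal: "\<And>j. \<beta> $ j \<noteq> 0 \<Longrightarrow> C / sqrt (real n) < eta0 / (eta0 + s0) * \<bar>\<beta> $ j\<bar> / (2 * sqrt (3 * v))"
  shows "model_hat (post_mean pr mu (real n) X n (rescaled X n (\<lambda>i. X i \<bullet> \<beta> + e i))) C = model_true \<beta>"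
proof
  fix k
  let ?sh = "sigma_hat_sq X n (\<lambda>i. X i \<bullet> \<beta> + e i)" and ?u = "ols_orth X n e"
  have sh: "v / 4 < ?sh" "?sh < 3 * v"
    using sigma_hat_sq_bounds[OF design nK v S u_small] by simp_all
  have "CARD('k) < n"
    using nK zero_less_card_finite[where 'a = 'k] by linarith
  moreover have sh_pos: "0 < ?sh"
    using sh v by linarith
  ultimately obtain \<rho> where \<rho>: "eta0 / (eta0 + s0) \<le> \<rho>" "\<rho> \<le> 1" and abs_pm:
    "\<bar>post_mean pr mu (real n) X n (rescaled X n (\<lambda>i. X i \<bullet> \<beta> + e i)) $ k\<bar>
      = \<rho> * (sqrt (real n) / sqrt ?sh * \<bar>\<beta> $ k + ?u $ k\<bar>)"
    by (rule abs_post_mean_rescaled[OF design])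
  have c0: "0 < eta0 / (eta0 + s0)"
    using eta0_pos s0_pos by simp
  show "model_hat (post_mean pr mu (real n) X n (rescaled X n (\<lambda>i. X i \<bullet> \<beta> + e i))) C k = model_true \<beta> k"
  proof (cases "\<beta> $ k = 0")
    case True
    have "\<rho> * (sqrt (real n) / sqrt ?sh * \<bar>?u $ k\<bar>) \<le> sqrt (real n) / sqrt ?sh * \<bar>?u $ k\<bar>"
      using \<rho> c0 sh v by (intro mult_left_le_one_le) auto
    also have "\<dots> < C"
      by (rule scaled_noise_below_threshold[OF v C sh(1) u_noise])
    finally show ?thesis
      using True abs_pm by (simp add: model_hat_def model_true_def)
  next
    case False
    have "0 < n"
      using \<open>CARD('k) < n\<close> by simp
    then have "C < eta0 / (eta0 + s0) * (sqrt (real n) / sqrt ?sh * \<bar>\<beta> $ k + ?u $ k\<bar>)"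
      by (rule scaled_signal_above_threshold[OF _ v c0 sh_pos sh(2) u_signal[OF False] C_signal[OF False]])
    also have "\<dots> \<le> \<rho> * (sqrt (real n) / sqrt ?sh * \<bar>\<beta> $ k + ?u $ k\<bar>)"
      using \<rho> sh_pos by (intro mult_right_mono) auto
    finally show ?thesis
      using False abs_pm by (simp add: model_hat_def model_true_def)
  qed
qed

end

section \<open>Selection consistency\<close>

lemma ols_orth_bounds_of_cross_products:
  fixes X :: "nat \<Rightarrow> real^'k" and e :: "nat \<Rightarrow> real" and \<beta> :: "real^'k"
  assumes n: "n > 0"
    and T1: "\<And>j. (\<Sum>i<n. X i $ j * e i)\<^sup>2 < real n * (v * C\<^sup>2 / 4)"
    and T2: "\<And>j. (\<Sum>i<n. X i $ j * e i)\<^sup>2 < (real n)\<^sup>2 * \<delta> j"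
    and \<delta>: "\<And>j. \<delta> j \<le> v / (4 * real CARD('k))" "\<And>j. \<beta> $ j \<noteq> 0 \<Longrightarrow> \<delta> j \<le> (\<beta> $ j)\<^sup>2 / 4"
  shows "ols_orth X n e \<bullet> ols_orth X n e < v / 4"
    and "real n * (ols_orth X n e $ j)\<^sup>2 < v * C\<^sup>2 / 4"
    and "\<beta> $ j \<noteq> 0 \<Longrightarrow> \<bar>ols_orth X n e $ j\<bar> < \<bar>\<beta> $ j\<bar> / 2"
proof -
  let ?u = "ols_orth X n e"
  have u_sq: "(?u $ j)\<^sup>2 = (\<Sum>i<n. X i $ j * e i)\<^sup>2 / (real n)\<^sup>2" for j
    by (simp add: ols_orth_def power_divide)
  have u_delta: "(?u $ j)\<^sup>2 < \<delta> j" for j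
    using T2[of j] n by (simp add: u_sq divide_less_eq mult.commute)
  then show "?u \<bullet> ?u < v / 4"
    using \<delta>(1) by (intro inner_self_less_of_components) (simp_all add: divide_divide_eq_left)
  have "real n * (?u $ j)\<^sup>2 = (\<Sum>i<n. X i $ j * e i)\<^sup>2 / real n"
    unfolding u_sq using n by (simp add: power2_eq_square[of "real n"])
  then show "real n * (?u $ j)\<^sup>2 < v * C\<^sup>2 / 4"
    using T1[of j] n by (simp add: divide_less_eq mult.commute)
  assume "\<beta> $ j \<noteq> 0"
  then have "\<bar>?u $ j\<bar>\<^sup>2 < (\<bar>\<beta> $ j\<bar> / 2)\<^sup>2"
    using u_delta[of j] \<delta>(2)[of j] by (simp add: power_divide)
  then show "\<bar>?u $ j\<bar> < \<bar>\<beta> $ j\<bar> / 2"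
    by (rule power2_less_imp_less) simp
qed

lemma eventually_less_of_tendsto_zero:
  fixes f :: "nat \<Rightarrow> real" and \<gamma> :: "'j::finite \<Rightarrow> real"
  assumes "f \<longlonglongrightarrow> 0"
  shows "\<forall>\<^sub>F n in sequentially. \<forall>j. 0 < \<gamma> j \<longrightarrow> f n < \<gamma> j"
proof (rule eventually_all_finite)
  show "\<forall>\<^sub>F n in sequentially. 0 < \<gamma> j \<longrightarrow> f n < \<gamma> j" for j
    using order_tendstoD(2)[OF assms, of "\<gamma> j"] by (cases "0 < \<gamma> j") auto
qed

locale spike_slab_model = spike_slab_prior pr mu eta0 s0 + centered_noise M eps v B
  for pr :: "(real^'k) measure" and mu eta0 s0 and M :: "'a measure" and eps v B
begin

definition selection_error :: "(nat \<Rightarrow> real^'k) \<Rightarrow> nat \<Rightarrow> real^'k \<Rightarrow> real \<Rightarrow> 'a set" where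
  "selection_error X n \<beta> C = {\<omega> \<in> space M.
     model_hat (post_mean pr mu (real n) X n (rescaled X n (\<lambda>i. X i \<bullet> \<beta> + eps i \<omega>))) C \<noteq> model_true \<beta>}"

lemma sets_selection_error:
  fixes X :: "nat \<Rightarrow> real^'k"
  assumes design: "gram X n = real n *\<^sub>R mat 1" and n: "n > 0"
  shows "selection_error X n \<beta> C \<in> sets M"
proof -
  have [measurable]: "(\<lambda>\<omega>. rescaled X n (\<lambda>i. X i \<bullet> \<beta> + eps i \<omega>) i) \<in> borel_measurable M" for i
    unfolding rescaled_def sigma_hat_sq_eq_rss[OF design n] rss_def ols_orth_def inner_vec_def
      vec_lambda_beta by measurable
  have "selection_error X n \<beta> C = {\<omega> \<in> space M. \<exists>k. (C \<le> \<bar>post_mean pr mu (real n) X n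
      (rescaled X n (\<lambda>i. X i \<bullet> \<beta> + eps i \<omega>)) $ k\<bar>) \<noteq> (\<beta> $ k \<noteq> 0)}"
    by (auto simp: selection_error_def model_hat_def model_true_def fun_eq_iff)
  also have "\<dots> \<in> sets M"
    by measurable
  finally show ?thesis .
qed

lemma selection_error_subset:
  fixes X :: "nat \<Rightarrow> real^'k" and \<beta> :: "real^'k"
  assumes design: "gram X n = real n *\<^sub>R mat 1" and nK: "2 * CARD('k) \<le> n"
    and v: "v > 0" and C: "C > 0"
    and \<delta>: "\<And>j. \<delta> j \<le> v / (4 * real CARD('k))" "\<And>j. \<beta> $ j \<noteq> 0 \<Longrightarrow> \<delta> j \<le> (\<beta> $ j)\<^sup>2 / 4"
    and C_signal: "\<And>j. \<beta> $ j \<noteq> 0 \<Longrightarrow> C / sqrt (real n) < eta0 / (eta0 + s0) * \<bar>\<beta> $ j\<bar> / (2 * sqrt (3 * v))"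
  shows "selection_error X n \<beta> C
    \<subseteq> {\<omega> \<in> space M. real n * v / 2 \<le> \<bar>(\<Sum>i<n. (eps i \<omega>)\<^sup>2) - real n * v\<bar>}
      \<union> (\<Union>j. {\<omega> \<in> space M. real n * (v * C\<^sup>2 / 4) \<le> (\<Sum>i<n. X i $ j * eps i \<omega>)\<^sup>2}
          \<union> {\<omega> \<in> space M. (real n)\<^sup>2 * \<delta> j \<le> (\<Sum>i<n. X i $ j * eps i \<omega>)\<^sup>2})"
    (is "_ \<subseteq> ?bad")
proof
  fix \<omega> assume err: "\<omega> \<in> selection_error X n \<beta> C"
  show "\<omega> \<in> ?bad"
  proof (rule ccontr)
    assume "\<omega> \<notin> ?bad"
    then have S: "\<bar>(\<Sum>i<n. (eps i \<omega>)\<^sup>2) - real n * v\<bar> < real n * v / 2"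
      and T: "\<And>j. (\<Sum>i<n. X i $ j * eps i \<omega>)\<^sup>2 < real n * (v * C\<^sup>2 / 4)"
        "\<And>j. (\<Sum>i<n. X i $ j * eps i \<omega>)\<^sup>2 < (real n)\<^sup>2 * \<delta> j"
      using err by (auto simp: selection_error_def not_le)
    have "n > 0"
      using nK zero_less_card_finite[where 'a = 'k] by linarith
    note u = ols_orth_bounds_of_cross_products[OF this T \<delta>]
    have "model_hat (post_mean pr mu (real n) X n (rescaled X n (\<lambda>i. X i \<bullet> \<beta> + eps i \<omega>))) C
        = model_true \<beta>"
      by (rule model_hat_eq_model_true[OF design nK v C S u C_signal])
    with err show False
      by (simp add: selection_error_def)
  qed
qed

lemma prob_selection_error_le:
  fixes X :: "nat \<Rightarrow> real^'k" and \<beta> :: "real^'k"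
  assumes design: "gram X n = real n *\<^sub>R mat 1" and nK: "2 * CARD('k) \<le> n"
    and v: "v > 0" and C: "C > 0"
    and \<delta>: "\<And>j. 0 < \<delta> j" "\<And>j. \<delta> j \<le> v / (4 * real CARD('k))"
      "\<And>j. \<beta> $ j \<noteq> 0 \<Longrightarrow> \<delta> j \<le> (\<beta> $ j)\<^sup>2 / 4"
    and C_signal: "\<And>j. \<beta> $ j \<noteq> 0 \<Longrightarrow> C / sqrt (real n) < eta0 / (eta0 + s0) * \<bar>\<beta> $ j\<bar> / (2 * sqrt (3 * v))"
  shows "prob (selection_error X n \<beta> C) \<le> 4 * B / v\<^sup>2 / real n + (\<Sum>j\<in>UNIV. 4 / C\<^sup>2 + v / \<delta> j / real n)"
proof -
  have n: "n > 0"
    using nK zero_less_card_finite[where 'a = 'k] by linarith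
  have design_norm: "(\<Sum>i<n. (X i $ j)\<^sup>2) = real n" for j
    using gram_eq_scaled_id_entry[OF design, of j j] by (simp add: power2_eq_square)
  let ?BS = "{\<omega> \<in> space M. real n * v / 2 \<le> \<bar>(\<Sum>i<n. (eps i \<omega>)\<^sup>2) - real n * v\<bar>}"
  let ?B1 = "\<lambda>j. {\<omega> \<in> space M. real n * (v * C\<^sup>2 / 4) \<le> (\<Sum>i<n. X i $ j * eps i \<omega>)\<^sup>2}"
  let ?B2 = "\<lambda>j. {\<omega> \<in> space M. (real n)\<^sup>2 * \<delta> j \<le> (\<Sum>i<n. X i $ j * eps i \<omega>)\<^sup>2}"
  have "prob (selection_error X n \<beta> C) \<le> prob (?BS \<union> (\<Union>j. ?B1 j \<union> ?B2 j))"
    using selection_error_subset[OF design nK v C \<delta>(2,3) C_signal]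
    by (intro finite_measure_mono) auto
  also have "\<dots> \<le> prob ?BS + (\<Sum>j\<in>UNIV. prob (?B1 j) + prob (?B2 j))"
    by (intro order_trans[OF measure_Un_le] add_left_mono order_trans[OF measure_UNION_le]
        sum_mono measure_Un_le) auto
  also have "\<dots> \<le> 4 * B / v\<^sup>2 / real n + (\<Sum>j\<in>UNIV. 4 / C\<^sup>2 + v / \<delta> j / real n)"
  proof (intro add_mono sum_mono)
    show "prob ?BS \<le> 4 * B / v\<^sup>2 / real n"
      using prob_noise_energy_deviation_ge[of "real n * v / 2" n] n v
      by (simp add: power2_eq_square field_simps)
    show "prob (?B1 j) \<le> 4 / C\<^sup>2" for j
      using prob_weighted_noise_sq_ge[where c = "real n * (v * C\<^sup>2 / 4)" and a = "\<lambda>i. X i $ j" and n = n]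
        n v C
      by (simp add: design_norm field_simps)
    show "prob (?B2 j) \<le> v / \<delta> j / real n" for j
      using prob_weighted_noise_sq_ge[where c = "(real n)\<^sup>2 * \<delta> j" and a = "\<lambda>i. X i $ j" and n = n]
        n \<delta>(1)[of j]
      by (simp add: design_norm power2_eq_square[of "real n"] field_simps)
  qed
  finally show ?thesis .
qed

lemma prob_selection_error_tendsto_zero:
  fixes x :: "nat \<Rightarrow> nat \<Rightarrow> real^'k" and \<beta> :: "real^'k" and C :: "nat \<Rightarrow> real"
  assumes design: "\<And>n. CARD('k) < n \<Longrightarrow> gram (x n) n = real n *\<^sub>R mat 1"
    and v: "v > 0" and C_pos: "\<And>n. C n > 0" and C_inf: "filterlim C at_top sequentially"
    and C_slow: "(\<lambda>n. C n / sqrt (real n)) \<longlonglongrightarrow> 0"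
  shows "(\<lambda>n. prob (selection_error (x n) n \<beta> (C n))) \<longlonglongrightarrow> 0"
proof -
  define \<delta> where "\<delta> j = min (v / (4 * real CARD('k))) (if \<beta> $ j = 0 then 1 else (\<beta> $ j)\<^sup>2 / 4)" for j
  define bound where "bound n = 4 * B / v\<^sup>2 / real n + (\<Sum>j\<in>UNIV. 4 / (C n)\<^sup>2 + v / \<delta> j / real n)" for n
  have \<delta>: "0 < \<delta> j" "\<delta> j \<le> v / (4 * real CARD('k))" "\<beta> $ j \<noteq> 0 \<Longrightarrow> \<delta> j \<le> (\<beta> $ j)\<^sup>2 / 4" for j
    using v by (auto simp: \<delta>_def)
  have signal: "0 < eta0 / (eta0 + s0) * \<bar>\<beta> $ j\<bar> / (2 * sqrt (3 * v)) \<longleftrightarrow> \<beta> $ j \<noteq> 0" for j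
    using eta0_pos s0_pos v by (auto simp: zero_less_mult_iff zero_less_divide_iff)
  from eventually_less_of_tendsto_zero[OF C_slow,
      where \<gamma> = "\<lambda>j. eta0 / (eta0 + s0) * \<bar>\<beta> $ j\<bar> / (2 * sqrt (3 * v))"]
    eventually_ge_at_top[of "2 * CARD('k)"]
  have bound_ev: "\<forall>\<^sub>F n in sequentially. prob (selection_error (x n) n \<beta> (C n)) \<le> bound n"
  proof eventually_elim
    case (elim n)
    then have "CARD('k) < n"
      using zero_less_card_finite[where 'a = 'k] by linarith
    moreover have "C n / sqrt (real n) < eta0 / (eta0 + s0) * \<bar>\<beta> $ j\<bar> / (2 * sqrt (3 * v))"
      if "\<beta> $ j \<noteq> 0" for j
      using elim(1) signal[of j] that by blast
    ultimately show ?case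
      unfolding bound_def by (intro prob_selection_error_le[OF design elim(2) v C_pos \<delta>])
  qed
  have "(\<lambda>n. 4 / (C n)\<^sup>2) \<longlonglongrightarrow> 0"
    by (intro tendsto_divide_0[OF tendsto_const] filterlim_at_top_imp_at_infinity
        filterlim_pow_at_top C_inf) simp
  then have bound_lim: "bound \<longlonglongrightarrow> 0"
    unfolding bound_def by (intro tendsto_add_zero tendsto_null_sum lim_const_over_n)
  show ?thesis
    by (rule tendsto_sandwich[OF _ bound_ev tendsto_const bound_lim]) simp
qed

end

theorem theorem7:
  fixes x :: "nat \<Rightarrow> nat \<Rightarrow> real^'k"
    and beta0 :: "real^'k"
    and M :: "'a measure"
    and eps :: "nat \<Rightarrow> 'a \<Rightarrow> real"
    and sigma0sq Mbd eta0 s0sq :: real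
    and pr :: "(real^'k) measure"
    and mu :: "real measure"
    and C :: "nat \<Rightarrow> real"
  assumes design_orth: "\<And>n. n > CARD('k) \<Longrightarrow> gram (x n) n = real n *\<^sub>R mat 1"
    and design_centered: "\<And>n k. n > CARD('k) \<Longrightarrow> (\<Sum>i<n. x n i $ k) = 0"
    and design_max: "(\<lambda>n. Max ((\<lambda>i. norm (x n i)) ` {..<n}) / sqrt (real n)) \<longlonglongrightarrow> 0"
    and P: "prob_space M"
    and eps_rv: "\<And>i. eps i \<in> borel_measurable M"
    and eps_indep: "prob_space.indep_vars M (\<lambda>_. borel) eps UNIV"
    and eps_mean: "\<And>i. prob_space.expectation M (eps i) = 0"
    and eps_var: "\<And>i. prob_space.expectation M (\<lambda>\<omega>. (eps i \<omega>)\<^sup>2) = sigma0sq"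
    and sigma0_pos: "sigma0sq > 0"
    and eps_4int: "\<And>i. integrable M (\<lambda>\<omega>. (eps i \<omega>) ^ 4)"
    and eps_4bd: "\<And>i. prob_space.expectation M (\<lambda>\<omega>. (eps i \<omega>) ^ 4) \<le> Mbd"
    and pr_prob: "prob_space pr" and pr_sets: "sets pr = sets borel"
    and mu_prob: "prob_space mu" and mu_sets: "sets mu = sets borel"
    and eta0_pos: "eta0 > 0"
    and pr_supp: "AE g in pr. \<forall>k. g $ k \<ge> eta0"
    and s0_pos: "s0sq > 0"
    and mu_pos: "AE s in mu. s > 0"
    and mu_supp: "AE s in mu. s \<le> s0sq"
    and C_pos: "\<And>n. C n > 0"
    and C_inc: "incseq C"
    and C_inf: "filterlim C at_top sequentially"
    and C_slow: "(\<lambda>n. C n / sqrt (real n)) \<longlonglongrightarrow> 0"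
  shows "(\<forall>n>CARD('k). {\<omega> \<in> space M.
             model_hat (post_mean pr mu (real n) (x n) n
                (rescaled (x n) n (\<lambda>i. x n i \<bullet> beta0 + eps i \<omega>))) (C n)
             \<noteq> model_true beta0} \<in> sets M)
       \<and> (\<lambda>n. measure M {\<omega> \<in> space M.
             model_hat (post_mean pr mu (real n) (x n) n
                (rescaled (x n) n (\<lambda>i. x n i \<bullet> beta0 + eps i \<omega>))) (C n)
             \<noteq> model_true beta0}) \<longlonglongrightarrow> 0"
proof -
  have "spike_slab_prior pr mu eta0 s0sq"
    by (rule spike_slab_prior.intro) fact+
  moreover have "centered_noise M eps sigma0sq Mbd"
    using P eps_indep eps_mean eps_var eps_4int eps_4bd
    by (simp add: centered_noise_def centered_noise_axioms_def)
  ultimately interpret spike_slab_model pr mu eta0 s0sq M eps sigma0sq Mbd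
    by (rule spike_slab_model.intro)
  have "(\<lambda>n. prob (selection_error (x n) n beta0 (C n))) \<longlonglongrightarrow> 0"
    by (rule prob_selection_error_tendsto_zero[OF design_orth sigma0_pos C_pos C_inf C_slow])
  moreover have "selection_error (x n) n beta0 (C n) \<in> sets M" if "CARD('k) < n" for n
    using that by (intro sets_selection_error design_orth) auto
  ultimately show ?thesis
    unfolding selection_error_def[symmetric] by auto
qed

end
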